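(* Up to isomorphism, the specific sets of $S$-probabilities (for arbitrary sets $S$) are exactly the bounded posets with an antitone involution that have a full and uniform set of specific states. That is: every specific set of $S$-probabilities, with the pointwise order, $p\mapsto 1-p$, $0$ and $1$, is a bounded poset with an antitone involution having a full and uniform set of specific states; and conversely every bounded poset with an antitone involution having a full and uniform set of specific states is isomorphic to a specific set of $S$-probabilities for some set $S$.
   Context: An $S$-probability is a function $p\colon S\to[0,1]$; sets $P$ of them are ordered pointwise, $0,1$ are constant functions, sums are pointwise. In a bounded poset $\mathbf P=(P,\le,{}',0,1)$ with an antitone involution $'$ (i.e. $p\le q\Rightarrow q'\le p'$ and $p''=p$), $p\wedge q=0$ means the only lower bound of $p,q$ in $P$ is $0$. A set $P$ of $S$-probabilities is specific if (1) $0,1\in P$; (2) $p\in P\Rightarrow 1-p\in P$; (3) $p,q\in P$, $p\wedge q=0\Rightarrow p+q\in P$. A specific state on $\mathbf P$ is a map $s\colon P\to[0,1]$ with (S1) $s(0)=0$, $s(1)=1$; (S2) $s(p')=1-s(p)$; (S3) $p\le q\Rightarrow s(p)\le s(q)$; (S4) if $p\wedge q=0$ then there is $r\in P$ with $r\ge p$, $r\ge q$ and $s(r)=s(p)+s(q)$. A set $T$ of specific states is full if $s(p)\le s(q)$ for all $s\in T$ implies $p\le q$, and uniform if for every disjoint pair $p,q$ a single $r$ witnesses (S4) simultaneously for all $s\in T$. Isomorphism means an order isomorphism preserving $'$, $0$ and $1$. *)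

theory Defs
  imports Complex_Main "HOL-Library.FuncSet"
begin

definition bpai :: "'a set \<Rightarrow> ('a \<Rightarrow> 'a \<Rightarrow> bool) \<Rightarrow> ('a \<Rightarrow> 'a) \<Rightarrow> 'a \<Rightarrow> 'a \<Rightarrow> bool" where
  "bpai P le c z u \<longleftrightarrow>
     (\<forall>p\<in>P. le p p) \<and>
     (\<forall>p\<in>P. \<forall>q\<in>P. le p q \<and> le q p \<longrightarrow> p = q) \<and>
     (\<forall>p\<in>P. \<forall>q\<in>P. \<forall>r\<in>P. le p q \<and> le q r \<longrightarrow> le p r) \<and>
     z \<in> P \<and> u \<in> P \<and> (\<forall>p\<in>P. le z p \<and> le p u) \<and>
     (\<forall>p\<in>P. c p \<in> P) \<and>
     (\<forall>p\<in>P. \<forall>q\<in>P. le p q \<longrightarrow> le (c q) (c p)) \<and>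
     (\<forall>p\<in>P. c (c p) = p)"

text \<open>p \<and> q = 0: the only lower bound of p, q in P is 0.\<close>
definition disj :: "'a set \<Rightarrow> ('a \<Rightarrow> 'a \<Rightarrow> bool) \<Rightarrow> 'a \<Rightarrow> 'a \<Rightarrow> 'a \<Rightarrow> bool" where
  "disj P le z p q \<longleftrightarrow> (\<forall>r\<in>P. le r p \<and> le r q \<longrightarrow> r = z)"

definition specific_state ::
  "'a set \<Rightarrow> ('a \<Rightarrow> 'a \<Rightarrow> bool) \<Rightarrow> ('a \<Rightarrow> 'a) \<Rightarrow> 'a \<Rightarrow> 'a \<Rightarrow> ('a \<Rightarrow> real) \<Rightarrow> bool" where
  "specific_state P le c z u s \<longleftrightarrow>
     (\<forall>p\<in>P. 0 \<le> s p \<and> s p \<le> 1) \<and>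
     s z = 0 \<and> s u = 1 \<and>
     (\<forall>p\<in>P. s (c p) = 1 - s p) \<and>
     (\<forall>p\<in>P. \<forall>q\<in>P. le p q \<longrightarrow> s p \<le> s q) \<and>
     (\<forall>p\<in>P. \<forall>q\<in>P. disj P le z p q \<longrightarrow>
        (\<exists>r\<in>P. le p r \<and> le q r \<and> s r = s p + s q))"

definition full_states :: "'a set \<Rightarrow> ('a \<Rightarrow> 'a \<Rightarrow> bool) \<Rightarrow> ('a \<Rightarrow> real) set \<Rightarrow> bool" where
  "full_states P le T \<longleftrightarrow>
     (\<forall>p\<in>P. \<forall>q\<in>P. (\<forall>s\<in>T. s p \<le> s q) \<longrightarrow> le p q)"

definition uniform_states :: "'a set \<Rightarrow> ('a \<Rightarrow> 'a \<Rightarrow> bool) \<Rightarrow> 'a \<Rightarrow> ('a \<Rightarrow> real) set \<Rightarrow> bool" where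
  "uniform_states P le z T \<longleftrightarrow>
     (\<forall>p\<in>P. \<forall>q\<in>P. disj P le z p q \<longrightarrow>
        (\<exists>r\<in>P. le p r \<and> le q r \<and> (\<forall>s\<in>T. s r = s p + s q)))"

definition has_full_uniform_states ::
  "'a set \<Rightarrow> ('a \<Rightarrow> 'a \<Rightarrow> bool) \<Rightarrow> ('a \<Rightarrow> 'a) \<Rightarrow> 'a \<Rightarrow> 'a \<Rightarrow> bool" where
  "has_full_uniform_states P le c z u \<longleftrightarrow>
     (\<exists>T. (\<forall>s\<in>T. specific_state P le c z u s) \<and> full_states P le T \<and> uniform_states P le z T)"

definition poset_iso ::
  "'a set \<Rightarrow> ('a \<Rightarrow> 'a \<Rightarrow> bool) \<Rightarrow> ('a \<Rightarrow> 'a) \<Rightarrow> 'a \<Rightarrow> 'a \<Rightarrow>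
   'b set \<Rightarrow> ('b \<Rightarrow> 'b \<Rightarrow> bool) \<Rightarrow> ('b \<Rightarrow> 'b) \<Rightarrow> 'b \<Rightarrow> 'b \<Rightarrow> ('a \<Rightarrow> 'b) \<Rightarrow> bool" where
  "poset_iso P le c z u Q le' c' z' u' f \<longleftrightarrow>
     bij_betw f P Q \<and>
     (\<forall>p\<in>P. \<forall>q\<in>P. le p q \<longleftrightarrow> le' (f p) (f q)) \<and>
     (\<forall>p\<in>P. f (c p) = c' (f p)) \<and> f z = z' \<and> f u = u'"

text \<open>An S-probability is represented as an extensional function S \<rightarrow> [0,1]
  (value undefined outside S, as in FuncSet).\<close>

definition prob_le :: "'s set \<Rightarrow> ('s \<Rightarrow> real) \<Rightarrow> ('s \<Rightarrow> real) \<Rightarrow> bool" where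
  "prob_le S p q \<longleftrightarrow> (\<forall>x\<in>S. p x \<le> q x)"

definition prob_compl :: "'s set \<Rightarrow> ('s \<Rightarrow> real) \<Rightarrow> ('s \<Rightarrow> real)" where
  "prob_compl S p = (\<lambda>x\<in>S. 1 - p x)"

definition prob_zero :: "'s set \<Rightarrow> ('s \<Rightarrow> real)" where
  "prob_zero S = (\<lambda>x\<in>S. 0)"

definition prob_one :: "'s set \<Rightarrow> ('s \<Rightarrow> real)" where
  "prob_one S = (\<lambda>x\<in>S. 1)"

definition prob_plus :: "'s set \<Rightarrow> ('s \<Rightarrow> real) \<Rightarrow> ('s \<Rightarrow> real) \<Rightarrow> ('s \<Rightarrow> real)" where
  "prob_plus S p q = (\<lambda>x\<in>S. p x + q x)"

definition specific_set :: "'s set \<Rightarrow> ('s \<Rightarrow> real) set \<Rightarrow> bool" where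
  "specific_set S P \<longleftrightarrow>
     P \<subseteq> (S \<rightarrow>\<^sub>E {0..1}) \<and>
     prob_zero S \<in> P \<and> prob_one S \<in> P \<and>
     (\<forall>p\<in>P. prob_compl S p \<in> P) \<and>
     (\<forall>p\<in>P. \<forall>q\<in>P. disj P (prob_le S) (prob_zero S) p q \<longrightarrow> prob_plus S p q \<in> P)"

end

theory Submission
  imports Defs
begin

text \<open>A specific set of S-probabilities carries the evaluation states p \<mapsto> p x, x \<in> S:
  they are full because the order is pointwise, and uniform because the sum p + q of disjoint
  p, q lies in the set and dominates p and q. Conversely, a full set T of specific states
  embeds P into the functions T \<rightarrow> [0,1] by p \<mapsto> (s \<mapsto> s p): fullness and (S3) make this
  an order embedding, (S1) and (S2) make it preserve 0, 1 and the involution, and since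
  disjointness pulls back along an order embedding, uniformity makes the image closed under
  sums of disjoint elements.\<close>

lemma prob_le_antisym:
  assumes "p \<in> extensional S" "q \<in> extensional S" "prob_le S p q" "prob_le S q p"
  shows "p = q"
  using assms by (auto simp: prob_le_def intro: extensionalityI order_antisym)

lemma prob_compl_involutive:
  assumes "p \<in> extensional S"
  shows "prob_compl S (prob_compl S p) = p"
  using assms by (auto simp: prob_compl_def intro: extensionalityI)

lemma specific_set_memberD:
  assumes "specific_set S P" "p \<in> P"
  shows "p \<in> extensional S" and "x \<in> S \<Longrightarrow> 0 \<le> p x" and "x \<in> S \<Longrightarrow> p x \<le> 1"
  using assms by (auto simp: specific_set_def PiE_def Pi_def)

lemma specific_set_bpai:
  assumes "specific_set S P"
  shows "bpai P (prob_le S) (prob_compl S) (prob_zero S) (prob_one S)"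
  using assms specific_set_memberD[OF assms] unfolding bpai_def specific_set_def
  by (auto simp: prob_le_def prob_zero_def prob_one_def prob_compl_def
      intro: prob_le_antisym[unfolded prob_le_def] prob_compl_involutive order_trans)

definition point_evaluations :: "'s set \<Rightarrow> (('s \<Rightarrow> real) \<Rightarrow> real) set" where
  "point_evaluations S = (\<lambda>x p. p x) ` S"

lemma full_point_evaluations: "full_states P (prob_le S) (point_evaluations S)"
  by (auto simp: full_states_def point_evaluations_def prob_le_def)

lemma specific_set_uniform_point_evaluations:
  assumes "specific_set S P"
  shows "uniform_states P (prob_le S) (prob_zero S) (point_evaluations S)"
  unfolding uniform_states_def
proof (intro ballI impI)
  fix p q assume "p \<in> P" "q \<in> P" "disj P (prob_le S) (prob_zero S) p q"
  then have "prob_plus S p q \<in> P"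
    using assms by (simp add: specific_set_def)
  with \<open>p \<in> P\<close> \<open>q \<in> P\<close> show "\<exists>r\<in>P. prob_le S p r \<and> prob_le S q r \<and>
      (\<forall>s\<in>point_evaluations S. s r = s p + s q)"
    using specific_set_memberD[OF assms]
    by (intro bexI[of _ "prob_plus S p q"])
      (auto simp: prob_le_def prob_plus_def point_evaluations_def)
qed

lemma uniform_states_additive:
  assumes "uniform_states P le z T" "s \<in> T" "p \<in> P" "q \<in> P" "disj P le z p q"
  shows "\<exists>r\<in>P. le p r \<and> le q r \<and> s r = s p + s q"
  using assms unfolding uniform_states_def by blast

lemma specific_set_point_evaluation_state:
  assumes "specific_set S P" "s \<in> point_evaluations S"
  shows "specific_state P (prob_le S) (prob_compl S) (prob_zero S) (prob_one S) s"
proof -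
  obtain x where "x \<in> S" "s = (\<lambda>p. p x)"
    using assms(2) by (auto simp: point_evaluations_def)
  then show ?thesis
    using specific_set_memberD[OF assms(1)]
      uniform_states_additive[OF specific_set_uniform_point_evaluations[OF assms(1)] assms(2)]
    unfolding specific_state_def
    by (auto simp: prob_le_def prob_compl_def prob_zero_def prob_one_def)
qed

lemma specific_set_has_full_uniform_states:
  assumes "specific_set S P"
  shows "has_full_uniform_states P (prob_le S) (prob_compl S) (prob_zero S) (prob_one S)"
  unfolding has_full_uniform_states_def
  using specific_set_point_evaluation_state[OF assms] full_point_evaluations
    specific_set_uniform_point_evaluations[OF assms]
  by blast

definition state_embedding :: "('a \<Rightarrow> real) set \<Rightarrow> 'a \<Rightarrow> ('a \<Rightarrow> real) \<Rightarrow> real" where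
  "state_embedding T p = (\<lambda>s\<in>T. s p)"

context
  fixes P le c z u and T :: "('a \<Rightarrow> real) set"
  assumes states: "\<And>s. s \<in> T \<Longrightarrow> specific_state P le c z u s"
begin

lemma state_embedding_range: "p \<in> P \<Longrightarrow> state_embedding T p \<in> T \<rightarrow>\<^sub>E {0..1}"
  using states by (auto simp: state_embedding_def specific_state_def)

lemma state_embedding_compl: "p \<in> P \<Longrightarrow> state_embedding T (c p) = prob_compl T (state_embedding T p)"
  using states by (auto simp: state_embedding_def prob_compl_def specific_state_def)

lemma state_embedding_zero: "state_embedding T z = prob_zero T"
  using states by (auto simp: state_embedding_def prob_zero_def specific_state_def)

lemma state_embedding_one: "state_embedding T u = prob_one T"
  using states by (auto simp: state_embedding_def prob_one_def specific_state_def)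

lemma state_embedding_le_iff:
  assumes "full_states P le T" "p \<in> P" "q \<in> P"
  shows "prob_le T (state_embedding T p) (state_embedding T q) \<longleftrightarrow> le p q"
  using assms states unfolding full_states_def specific_state_def
  by (auto simp: prob_le_def state_embedding_def)

end

lemma disj_if_disj_image:
  assumes "inj_on f P" "z \<in> P" "p \<in> P" "q \<in> P"
    and "\<forall>p\<in>P. \<forall>q\<in>P. le p q \<longleftrightarrow> le' (f p) (f q)"
    and "disj (f ` P) le' (f z) (f p) (f q)"
  shows "disj P le z p q"
  using assms unfolding disj_def by (auto dest: inj_onD)

lemma state_embedding_poset_iso:
  assumes "bpai P le c z u" "\<And>s. s \<in> T \<Longrightarrow> specific_state P le c z u s" "full_states P le T"
  shows "poset_iso P le c z u (state_embedding T ` P) (prob_le T) (prob_compl T)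
    (prob_zero T) (prob_one T) (state_embedding T)"
proof -
  have le_iff: "\<And>p q. p \<in> P \<Longrightarrow> q \<in> P \<Longrightarrow>
      prob_le T (state_embedding T p) (state_embedding T q) \<longleftrightarrow> le p q"
    using state_embedding_le_iff[OF assms(2,3)] .
  have "inj_on (state_embedding T) P"
  proof (rule inj_onI)
    fix p q assume "p \<in> P" "q \<in> P" "state_embedding T p = state_embedding T q"
    then have "le p q" "le q p"
      using le_iff by (metis prob_le_def order_refl)+
    with \<open>p \<in> P\<close> \<open>q \<in> P\<close> assms(1) show "p = q"
      unfolding bpai_def by blast
  qed
  then show ?thesis
    unfolding poset_iso_def bij_betw_def
    using le_iff state_embedding_compl[OF assms(2)] state_embedding_zero[OF assms(2)]
      state_embedding_one[OF assms(2)]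
    by blast
qed

lemma state_embedding_specific_set:
  assumes bp: "bpai P le c z u" and states: "\<And>s. s \<in> T \<Longrightarrow> specific_state P le c z u s"
    and "full_states P le T" and uniform: "uniform_states P le z T"
  shows "specific_set T (state_embedding T ` P)"
  unfolding specific_set_def
proof (intro conjI ballI impI)
  let ?e = "state_embedding T"
  have iso: "poset_iso P le c z u (?e ` P) (prob_le T) (prob_compl T) (prob_zero T) (prob_one T) ?e"
    using state_embedding_poset_iso[OF assms(1-3)] .
  have zP: "z \<in> P" and uP: "u \<in> P" and cP: "\<And>p. p \<in> P \<Longrightarrow> c p \<in> P"
    using bp by (simp_all add: bpai_def)
  show "?e ` P \<subseteq> T \<rightarrow>\<^sub>E {0..1}"
    using state_embedding_range[OF states] by blast
  show "prob_zero T \<in> ?e ` P" "prob_one T \<in> ?e ` P"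
    using iso zP uP unfolding poset_iso_def by force+
  show "prob_compl T p \<in> ?e ` P" if "p \<in> ?e ` P" for p
    using that iso cP unfolding poset_iso_def by force
  show "prob_plus T p q \<in> ?e ` P"
    if "p \<in> ?e ` P" "q \<in> ?e ` P" and disj_image: "disj (?e ` P) (prob_le T) (prob_zero T) p q"
    for p q
  proof -
    obtain p0 q0 where "p0 \<in> P" "q0 \<in> P" and pq: "p = ?e p0" "q = ?e q0"
      using \<open>p \<in> ?e ` P\<close> \<open>q \<in> ?e ` P\<close> by blast
    moreover have "disj P le z p0 q0"
    proof (rule disj_if_disj_image)
      show "inj_on ?e P" "\<forall>p\<in>P. \<forall>q\<in>P. le p q \<longleftrightarrow> prob_le T (?e p) (?e q)"
        using iso unfolding poset_iso_def bij_betw_def by blast+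
      show "disj (?e ` P) (prob_le T) (?e z) (?e p0) (?e q0)"
        using disj_image by (simp add: pq state_embedding_zero[OF states])
    qed fact+
    ultimately obtain r where "r \<in> P" "\<forall>s\<in>T. s r = s p0 + s q0"
      using uniform unfolding uniform_states_def by blast
    then have "?e r = prob_plus T p q"
      by (auto simp: pq state_embedding_def prob_plus_def)
    with \<open>r \<in> P\<close> show ?thesis
      by (metis image_eqI)
  qed
qed

theorem theorem4p2:
  shows "(\<forall>(S :: 's set) P. specific_set S P \<longrightarrow>
            bpai P (prob_le S) (prob_compl S) (prob_zero S) (prob_one S) \<and>
            has_full_uniform_states P (prob_le S) (prob_compl S) (prob_zero S) (prob_one S))
       \<and> (\<forall>(P :: 'a set) le c z u. bpai P le c z u \<and> has_full_uniform_states P le c z u \<longrightarrow>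
            (\<exists>(S :: ('a \<Rightarrow> real) set) Q f. specific_set S Q \<and>
               poset_iso P le c z u Q (prob_le S) (prob_compl S) (prob_zero S) (prob_one S) f))"
proof (rule conjI; intro allI impI)
  fix S :: "'s set" and P
  assume "specific_set S P"
  then show "bpai P (prob_le S) (prob_compl S) (prob_zero S) (prob_one S) \<and>
      has_full_uniform_states P (prob_le S) (prob_compl S) (prob_zero S) (prob_one S)"
    using specific_set_bpai specific_set_has_full_uniform_states by blast
next
  fix P :: "'a set" and le c z u
  assume "bpai P le c z u \<and> has_full_uniform_states P le c z u"
  then obtain T where bp: "bpai P le c z u"
    and states: "\<And>s. s \<in> T \<Longrightarrow> specific_state P le c z u s" and full: "full_states P le T" and uniform: "uniform_states P le z T"
    unfolding has_full_uniform_states_def by blast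
  show "\<exists>(S :: ('a \<Rightarrow> real) set) Q f. specific_set S Q \<and>
      poset_iso P le c z u Q (prob_le S) (prob_compl S) (prob_zero S) (prob_one S) f"
    using state_embedding_specific_set[OF bp states full uniform]
      state_embedding_poset_iso[OF bp states full] by blast
qed

end
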